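(* Fix an assignment $\gamma\mapsto\phi_\gamma$ of LTL formulas to actions such that each $\phi_\gamma$ models $\gamma$, and use the LTL verification scheme described in the context. Let $Z$ be a decision structure that satisfies a specification $\varphi$, let $v$ be a node of $Z$ labelled by the action $\alpha$, and let $r_1,\dots,r_m$ be the labels of the arcs out of $v$. Let $\beta$ be an action such that (i) $\phi_\beta\models\phi_\alpha$, and (ii) for every state $w$ and every $i\in\{1,\dots,m\}$, $\alpha_R(w)=r_i$ if and only if $\beta_R(w)=r_i$. Then the decision structure $Z'$ obtained from $Z$ by relabelling $v$ with $\beta$ also satisfies $\varphi$. Consequently, the predicate "(i) and (ii) hold" is a sufficient condition for actions for this scheme.
   Context: Fix sets $\mathbb{W}$ (states), $\mathbb{S}$ (signals), $\mathcal{R}$ (return values). An action is a pair $\alpha=(\alpha_B,\alpha_R)$ with $\alpha_B:\mathbb{W}\to\mathbb{S}$, $\alpha_R:\mathbb{W}\to\mathcal{R}$. A decision structure is a finite directed acyclic graph $Z=(N,A)$ with a unique source, an arc labelling $\ell:A\to\mathcal{R}$ and a node labelling $\eta$ by actions, such that distinct arcs leaving the same node have distinct labels; $Z(w)$ is computed by starting at the source and, at node $v$ with $\eta(v)=\alpha$, following the arc out of $v$ labelled $\alpha_R(w)$ if it exists and otherwise outputting $\alpha$. The world assigns to each state $w$ and signal $x$ a set $\mathrm{Succ}(w,x)$ of infinite state sequences; $w^\alpha:=\mathrm{Succ}(w,\alpha_B(w))$. LTL formulas over atomic state propositions (any subset $U\subseteq\mathbb{W}$ is an atomic proposition, true at a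 state iff the state lies in $U$; non-temporal formulas are evaluated at the first state of a sequence) are evaluated on infinite state sequences with standard semantics; $\phi\models\psi$ means every infinite state sequence satisfying $\phi$ satisfies $\psi$. $\phi$ models $\alpha$ if for every $w_1$ and every $(w_2,w_3,\dots)\in w_1^\alpha$, the sequence $w_1,w_2,\dots$ satisfies $\phi$. LTL verification scheme: for a decision structure $Z$, let $\Delta_Z$ be the finite set of actions labelling its nodes and $Z^{-1}(\gamma)=\{w: Z(w)=\gamma\}$; set $\Psi_Z:=\bigvee_{\gamma\in\Delta_Z}\big(Z^{-1}(\gamma)\wedge\phi_\gamma\big)$. $Z$ satisfies the specification $\varphi$ (an LTL formula) iff $\square\Psi_Z\models\varphi$. A predicate $C(Z,v,\alpha,\beta)$ is a sufficient condition for actions if whenever $Z$ satisfies $\varphi$ and $C(Z,v,\eta(v),\beta)$ holds, the structure obtained by relabelling $v$ with $\beta$ satisfies $\varphi$. *)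

theory Defs
  imports Main
begin

text \<open>An action is a pair (alpha_B, alpha_R) of a signal map and a return-value map.\<close>
type_synonym ('w, 's, 'r) action = "('w \<Rightarrow> 's) \<times> ('w \<Rightarrow> 'r)"

abbreviation actB :: "('w, 's, 'r) action \<Rightarrow> 'w \<Rightarrow> 's" where "actB a \<equiv> fst a"
abbreviation actR :: "('w, 's, 'r) action \<Rightarrow> 'w \<Rightarrow> 'r" where "actR a \<equiv> snd a"

text \<open>Infinite state sequences are functions nat => 'w. Any set of states is an atomic proposition.\<close>
datatype 'w ltl =
    Atom "'w set"
  | LNot "'w ltl"
  | LAnd "'w ltl" "'w ltl"
  | LOr "'w ltl" "'w ltl"
  | LNext "'w ltl"
  | LUntil "'w ltl" "'w ltl"

definition suffix_seq :: "nat \<Rightarrow> (nat \<Rightarrow> 'w) \<Rightarrow> (nat \<Rightarrow> 'w)" where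
  "suffix_seq k \<sigma> = (\<lambda>i. \<sigma> (k + i))"

fun ltl_sat :: "(nat \<Rightarrow> 'w) \<Rightarrow> 'w ltl \<Rightarrow> bool" where
  "ltl_sat \<sigma> (Atom U) = (\<sigma> 0 \<in> U)"
| "ltl_sat \<sigma> (LNot \<phi>) = (\<not> ltl_sat \<sigma> \<phi>)"
| "ltl_sat \<sigma> (LAnd \<phi> \<psi>) = (ltl_sat \<sigma> \<phi> \<and> ltl_sat \<sigma> \<psi>)"
| "ltl_sat \<sigma> (LOr \<phi> \<psi>) = (ltl_sat \<sigma> \<phi> \<or> ltl_sat \<sigma> \<psi>)"
| "ltl_sat \<sigma> (LNext \<phi>) = ltl_sat (suffix_seq 1 \<sigma>) \<phi>"
| "ltl_sat \<sigma> (LUntil \<phi> \<psi>) =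
     (\<exists>k. ltl_sat (suffix_seq k \<sigma>) \<psi> \<and> (\<forall>j<k. ltl_sat (suffix_seq j \<sigma>) \<phi>))"

definition LTrue :: "'w ltl" where "LTrue = Atom UNIV"
definition LFalse :: "'w ltl" where "LFalse = Atom {}"

definition LEventually :: "'w ltl \<Rightarrow> 'w ltl" where "LEventually \<phi> = LUntil LTrue \<phi>"
definition LAlways :: "'w ltl \<Rightarrow> 'w ltl" where "LAlways \<phi> = LNot (LEventually (LNot \<phi>))"

definition ltl_entails :: "'w ltl \<Rightarrow> 'w ltl \<Rightarrow> bool" where
  "ltl_entails \<phi> \<psi> \<longleftrightarrow> (\<forall>\<sigma>. ltl_sat \<sigma> \<phi> \<longrightarrow> ltl_sat \<sigma> \<psi>)"

definition LBigOr :: "'w ltl list \<Rightarrow> 'w ltl" where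
  "LBigOr xs = foldr LOr xs LFalse"

text \<open>The world: Succ w x is a set of infinite state sequences (w2, w3, ...).\<close>
type_synonym ('w, 's) world = "'w \<Rightarrow> 's \<Rightarrow> (nat \<Rightarrow> 'w) set"

definition succ_act :: "('w, 's) world \<Rightarrow> 'w \<Rightarrow> ('w, 's, 'r) action \<Rightarrow> (nat \<Rightarrow> 'w) set" where
  "succ_act Succ w \<alpha> = Succ w (actB \<alpha> w)"

definition seq_cons :: "'w \<Rightarrow> (nat \<Rightarrow> 'w) \<Rightarrow> (nat \<Rightarrow> 'w)" where
  "seq_cons w \<rho> = (\<lambda>i. case i of 0 \<Rightarrow> w | Suc j \<Rightarrow> \<rho> j)"

definition models_action :: "('w, 's) world \<Rightarrow> 'w ltl \<Rightarrow> ('w, 's, 'r) action \<Rightarrow> bool" where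
  "models_action Succ \<phi> \<alpha> \<longleftrightarrow>
     (\<forall>w1 \<rho>. \<rho> \<in> succ_act Succ w1 \<alpha> \<longrightarrow> ltl_sat (seq_cons w1 \<rho>) \<phi>)"

text \<open>Nodes, arcs as triples (source, label, target), node labelling by actions, and the source node.
  Representing arcs as labelled triples allows parallel arcs with distinct labels.\<close>
record ('n, 'w, 's, 'r) dstruct =
  ds_nodes :: "'n set"
  ds_arcs :: "('n \<times> 'r \<times> 'n) set"
  ds_lab :: "'n \<Rightarrow> ('w, 's, 'r) action"
  ds_src :: 'n

definition ds_edges :: "('n, 'w, 's, 'r) dstruct \<Rightarrow> ('n \<times> 'n) set" where
  "ds_edges Z = {(u, v). \<exists>r. (u, r, v) \<in> ds_arcs Z}"

definition wf_dstruct :: "('n, 'w, 's, 'r) dstruct \<Rightarrow> bool" where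
  "wf_dstruct Z \<longleftrightarrow>
     finite (ds_nodes Z) \<and>
     (\<forall>u r v. (u, r, v) \<in> ds_arcs Z \<longrightarrow> u \<in> ds_nodes Z \<and> v \<in> ds_nodes Z) \<and>
     acyclic (ds_edges Z) \<and>
     \<comment> \<open>ds_src is the unique source (node without incoming arcs)\<close>
     ds_src Z \<in> ds_nodes Z \<and>
     (\<forall>u \<in> ds_nodes Z. (\<nexists>x. (x, u) \<in> ds_edges Z) \<longleftrightarrow> u = ds_src Z) \<and>
     \<comment> \<open>distinct arcs leaving the same node have distinct labels\<close>
     (\<forall>u r v v'. (u, r, v) \<in> ds_arcs Z \<longrightarrow> (u, r, v') \<in> ds_arcs Z \<longrightarrow> v = v')"

inductive ds_run :: "('n, 'w, 's, 'r) dstruct \<Rightarrow> 'w \<Rightarrow> 'n \<Rightarrow> ('w, 's, 'r) action \<Rightarrow> bool"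
  for Z w where
  stop: "\<nexists>v'. (v, actR (ds_lab Z v) w, v') \<in> ds_arcs Z \<Longrightarrow> ds_run Z w v (ds_lab Z v)"
| step: "(v, actR (ds_lab Z v) w, v') \<in> ds_arcs Z \<Longrightarrow> ds_run Z w v' \<gamma> \<Longrightarrow> ds_run Z w v \<gamma>"

definition ds_eval :: "('n, 'w, 's, 'r) dstruct \<Rightarrow> 'w \<Rightarrow> ('w, 's, 'r) action" where
  "ds_eval Z w = (THE \<gamma>. ds_run Z w (ds_src Z) \<gamma>)"

definition ds_actions :: "('n, 'w, 's, 'r) dstruct \<Rightarrow> ('w, 's, 'r) action set" where
  "ds_actions Z = ds_lab Z ` ds_nodes Z"

definition ds_preimage :: "('n, 'w, 's, 'r) dstruct \<Rightarrow> ('w, 's, 'r) action \<Rightarrow> 'w set" where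
  "ds_preimage Z \<gamma> = {w. ds_eval Z w = \<gamma>}"

definition relabel :: "('n, 'w, 's, 'r) dstruct \<Rightarrow> 'n \<Rightarrow> ('w, 's, 'r) action \<Rightarrow> ('n, 'w, 's, 'r) dstruct" where
  "relabel Z v \<beta> = Z\<lparr>ds_lab := (ds_lab Z)(v := \<beta>)\<rparr>"

text \<open>Psi_Z = OR over gamma in Delta_Z of (Z^{-1}(gamma) AND phi_gamma); the disjuncts are listed
  in an arbitrary order (irrelevant semantically).\<close>
definition Psi :: "(('w, 's, 'r) action \<Rightarrow> 'w ltl) \<Rightarrow> ('n, 'w, 's, 'r) dstruct \<Rightarrow> 'w ltl" where
  "Psi phi Z = LBigOr (map (\<lambda>\<gamma>. LAnd (Atom (ds_preimage Z \<gamma>)) (phi \<gamma>))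
                         (SOME xs. set xs = ds_actions Z \<and> distinct xs))"

definition ds_satisfies :: "(('w, 's, 'r) action \<Rightarrow> 'w ltl) \<Rightarrow> ('n, 'w, 's, 'r) dstruct \<Rightarrow> 'w ltl \<Rightarrow> bool" where
  "ds_satisfies phi Z \<phi> \<longleftrightarrow> ltl_entails (LAlways (Psi phi Z)) \<phi>"

definition sufficient_condition ::
  "(('w, 's, 'r) action \<Rightarrow> 'w ltl) \<Rightarrow>
   (('n, 'w, 's, 'r) dstruct \<Rightarrow> 'n \<Rightarrow> ('w, 's, 'r) action \<Rightarrow> ('w, 's, 'r) action \<Rightarrow> bool) \<Rightarrow> bool" where
  "sufficient_condition phi C \<longleftrightarrow>
     (\<forall>Z v \<beta> \<phi>. wf_dstruct Z \<longrightarrow> v \<in> ds_nodes Z \<longrightarrow>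
        ds_satisfies phi Z \<phi> \<longrightarrow> C Z v (ds_lab Z v) \<beta> \<longrightarrow> ds_satisfies phi (relabel Z v \<beta>) \<phi>)"

definition cond_i_ii ::
  "(('w, 's, 'r) action \<Rightarrow> 'w ltl) \<Rightarrow>
   ('n, 'w, 's, 'r) dstruct \<Rightarrow> 'n \<Rightarrow> ('w, 's, 'r) action \<Rightarrow> ('w, 's, 'r) action \<Rightarrow> bool" where
  "cond_i_ii phi Z v \<alpha> \<beta> \<longleftrightarrow>
     ltl_entails (phi \<beta>) (phi \<alpha>) \<and>
     (\<forall>w r. (\<exists>v'. (v, r, v') \<in> ds_arcs Z) \<longrightarrow> (actR \<alpha> w = r \<longleftrightarrow> actR \<beta> w = r))"

end

theory Submission
  imports Defs
begin

text \<open>By (ii), the relabelled node \<open>v\<close> leaves along exactly the arcs the old label \<open>\<alpha>\<close>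
  followed, so the runs of \<open>Z\<close> and \<open>Z'\<close> on any state coincide and the outputs differ only where
  the run stops at \<open>v\<close>, with \<open>\<beta>\<close> in place of \<open>\<alpha>\<close>. By (i), every sequence satisfying
  \<open>\<Psi>\<^sub>Z\<^sub>'\<close> then satisfies \<open>\<Psi>\<^sub>Z\<close>, so \<open>\<box>\<Psi>\<^sub>Z\<^sub>'\<close> entails \<open>\<box>\<Psi>\<^sub>Z\<close> and hence the specification.\<close>

lemma ltl_sat_LAlways: "ltl_sat \<sigma> (LAlways \<psi>) \<longleftrightarrow> (\<forall>k. ltl_sat (suffix_seq k \<sigma>) \<psi>)"
  by (simp add: LAlways_def LEventually_def LTrue_def)

lemma ltl_entails_LAlways_mono:
  "ltl_entails \<phi> \<psi> \<Longrightarrow> ltl_entails (LAlways \<phi>) (LAlways \<psi>)"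
  by (simp add: ltl_entails_def ltl_sat_LAlways)

lemma ltl_entails_trans:
  "ltl_entails \<phi> \<psi> \<Longrightarrow> ltl_entails \<psi> \<chi> \<Longrightarrow> ltl_entails \<phi> \<chi>"
  by (simp add: ltl_entails_def)

lemma ltl_sat_LBigOr: "ltl_sat \<sigma> (LBigOr xs) \<longleftrightarrow> (\<exists>x\<in>set xs. ltl_sat \<sigma> x)"
  by (induction xs) (auto simp: LBigOr_def LFalse_def)

lemma finite_ds_actions: "wf_dstruct Z \<Longrightarrow> finite (ds_actions Z)"
  by (simp add: wf_dstruct_def ds_actions_def)

lemma ltl_sat_Psi:
  assumes "finite (ds_actions Z)"
  shows "ltl_sat \<sigma> (Psi phi Z) \<longleftrightarrow>
    ds_eval Z (\<sigma> 0) \<in> ds_actions Z \<and> ltl_sat \<sigma> (phi (ds_eval Z (\<sigma> 0)))"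
proof -
  have "\<exists>xs. set xs = ds_actions Z \<and> distinct xs"
    using finite_distinct_list[OF assms] by blast
  then have "set (SOME xs. set xs = ds_actions Z \<and> distinct xs) = ds_actions Z"
    by (metis (mono_tags, lifting) someI_ex)
  then show ?thesis
    unfolding Psi_def ltl_sat_LBigOr by (auto simp: ds_preimage_def)
qed

lemma ds_run_deterministic:
  assumes "wf_dstruct Z"
  shows "ds_run Z w u \<gamma> \<Longrightarrow> ds_run Z w u \<gamma>' \<Longrightarrow> \<gamma> = \<gamma>'"
proof (induction arbitrary: \<gamma>' rule: ds_run.induct)
  case (stop v)
  from stop.prems show ?case
    by (cases rule: ds_run.cases) (use stop.hyps in auto)
next
  case (step v v' \<gamma>)
  from step.prems show ?case
  proof (cases rule: ds_run.cases)
    case stop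
    then show ?thesis using step.hyps by auto
  next
    case (step v'')
    with \<open>(v, actR (ds_lab Z v) w, v') \<in> ds_arcs Z\<close> have "v'' = v'"
      using assms by (auto simp: wf_dstruct_def)
    then show ?thesis using step.IH step by auto
  qed
qed

lemma wf_converse_ds_edges:
  assumes "wf_dstruct Z"
  shows "wf ((ds_edges Z)\<inverse>)"
proof (rule finite_acyclic_wf)
  have "ds_edges Z \<subseteq> ds_nodes Z \<times> ds_nodes Z"
    using assms unfolding wf_dstruct_def ds_edges_def by blast
  moreover have "finite (ds_nodes Z)" using assms by (simp add: wf_dstruct_def)
  ultimately show "finite ((ds_edges Z)\<inverse>)" by (auto intro: finite_subset)
  show "acyclic ((ds_edges Z)\<inverse>)" using assms by (simp add: wf_dstruct_def)
qed

lemma ds_run_exists: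
  assumes "wf_dstruct Z"
  shows "\<exists>\<gamma>. ds_run Z w u \<gamma>"
  using wf_converse_ds_edges[OF assms]
proof (induction u rule: wf_induct_rule)
  case (less u)
  show ?case
  proof (cases "\<exists>u'. (u, actR (ds_lab Z u) w, u') \<in> ds_arcs Z")
    case True
    then obtain u' where arc: "(u, actR (ds_lab Z u) w, u') \<in> ds_arcs Z" by blast
    then have "(u', u) \<in> (ds_edges Z)\<inverse>" by (auto simp: ds_edges_def)
    then obtain \<gamma> where "ds_run Z w u' \<gamma>" using less by blast
    then show ?thesis using ds_run.step[OF arc] by blast
  next
    case False
    then show ?thesis using ds_run.stop[of u Z w] by blast
  qed
qed

lemma ds_eval_eqI:
  assumes "wf_dstruct Z" "ds_run Z w (ds_src Z) \<gamma>"
  shows "ds_eval Z w = \<gamma>"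
  unfolding ds_eval_def using assms by (auto intro: ds_run_deterministic)

lemma ds_run_in_ds_actions:
  assumes "wf_dstruct Z"
  shows "ds_run Z w u \<gamma> \<Longrightarrow> u \<in> ds_nodes Z \<Longrightarrow> \<gamma> \<in> ds_actions Z"
proof (induction rule: ds_run.induct)
  case (stop v)
  then show ?case by (auto simp: ds_actions_def)
next
  case (step v v' \<gamma>)
  then show ?case using assms unfolding wf_dstruct_def by blast
qed

lemma ds_eval_in_ds_actions: "wf_dstruct Z \<Longrightarrow> ds_eval Z w \<in> ds_actions Z"
  using ds_run_exists ds_eval_eqI ds_run_in_ds_actions
  by (metis wf_dstruct_def)

lemma wf_dstruct_relabel: "wf_dstruct Z \<Longrightarrow> wf_dstruct (relabel Z v \<beta>)"
  by (simp add: wf_dstruct_def relabel_def ds_edges_def)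

lemma relabel_follows_same_arcs:
  assumes same_arcs: "\<forall>w r. (\<exists>v'. (v, r, v') \<in> ds_arcs Z) \<longrightarrow> (actR \<alpha> w = r \<longleftrightarrow> actR \<beta> w = r)"
    and lab: "ds_lab Z v = \<alpha>"
  shows "(u, actR (ds_lab (relabel Z v \<beta>) u) w, u') \<in> ds_arcs (relabel Z v \<beta>) \<longleftrightarrow>
    (u, actR (ds_lab Z u) w, u') \<in> ds_arcs Z"
proof (cases "u = v")
  case True
  have agree: "actR \<alpha> w = actR \<beta> w" if "(v, r, u') \<in> ds_arcs Z" "r = actR \<alpha> w \<or> r = actR \<beta> w" for r
  proof -
    have "actR \<alpha> w = r \<longleftrightarrow> actR \<beta> w = r"
      using same_arcs[rule_format, where w=w and r=r] that(1) by blast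
    then show ?thesis using that(2) by auto
  qed
  have "(v, actR \<beta> w, u') \<in> ds_arcs Z \<longleftrightarrow> (v, actR \<alpha> w, u') \<in> ds_arcs Z"
    using agree[of "actR \<alpha> w"] agree[of "actR \<beta> w"] by auto
  then show ?thesis using True lab by (simp add: relabel_def)
next
  case False
  then show ?thesis by (simp add: relabel_def)
qed

lemma ds_run_relabel:
  assumes same_arcs: "\<forall>w r. (\<exists>v'. (v, r, v') \<in> ds_arcs Z) \<longrightarrow> (actR \<alpha> w = r \<longleftrightarrow> actR \<beta> w = r)"
    and lab: "ds_lab Z v = \<alpha>"
  shows "ds_run Z w u \<gamma> \<Longrightarrow>
    \<exists>\<gamma>'. ds_run (relabel Z v \<beta>) w u \<gamma>' \<and> (\<gamma>' = \<gamma> \<or> \<gamma> = \<alpha> \<and> \<gamma>' = \<beta>)"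
proof (induction rule: ds_run.induct)
  case (stop u)
  then have "ds_run (relabel Z v \<beta>) w u (ds_lab (relabel Z v \<beta>) u)"
    by (intro ds_run.stop) (simp add: relabel_follows_same_arcs[OF same_arcs lab])
  then show ?case
    using lab by (intro exI[of _ "ds_lab (relabel Z v \<beta>) u"]) (simp add: relabel_def)
next
  case (step u u' \<gamma>)
  then obtain \<gamma>' where run': "ds_run (relabel Z v \<beta>) w u' \<gamma>'"
    and \<gamma>': "\<gamma>' = \<gamma> \<or> \<gamma> = \<alpha> \<and> \<gamma>' = \<beta>" by blast
  have "(u, actR (ds_lab (relabel Z v \<beta>) u) w, u') \<in> ds_arcs (relabel Z v \<beta>)"
    using step.hyps(1) by (simp add: relabel_follows_same_arcs[OF same_arcs lab])
  then have "ds_run (relabel Z v \<beta>) w u \<gamma>'" using run' by (rule ds_run.step)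
  with \<gamma>' show ?case by blast
qed

lemma ds_eval_relabel:
  assumes "wf_dstruct Z"
    and "\<forall>w r. (\<exists>v'. (v, r, v') \<in> ds_arcs Z) \<longrightarrow> (actR \<alpha> w = r \<longleftrightarrow> actR \<beta> w = r)"
    and "ds_lab Z v = \<alpha>"
  shows "ds_eval (relabel Z v \<beta>) w = ds_eval Z w \<or>
    ds_eval Z w = \<alpha> \<and> ds_eval (relabel Z v \<beta>) w = \<beta>"
proof -
  obtain \<gamma> where run: "ds_run Z w (ds_src Z) \<gamma>" using ds_run_exists[OF assms(1)] by blast
  then obtain \<gamma>' where run': "ds_run (relabel Z v \<beta>) w (ds_src (relabel Z v \<beta>)) \<gamma>'"
    and "\<gamma>' = \<gamma> \<or> \<gamma> = \<alpha> \<and> \<gamma>' = \<beta>"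
    using ds_run_relabel[OF assms(2,3)] by (fastforce simp: relabel_def)
  with ds_eval_eqI[OF assms(1) run] ds_eval_eqI[OF wf_dstruct_relabel[OF assms(1)] run']
  show ?thesis by simp
qed

lemma ltl_entails_Psi_relabel:
  assumes wf: "wf_dstruct Z"
    and lab: "ds_lab Z v = \<alpha>"
    and entails: "ltl_entails (phi \<beta>) (phi \<alpha>)"
    and same_arcs: "\<forall>w r. (\<exists>v'. (v, r, v') \<in> ds_arcs Z) \<longrightarrow> (actR \<alpha> w = r \<longleftrightarrow> actR \<beta> w = r)"
  shows "ltl_entails (Psi phi (relabel Z v \<beta>)) (Psi phi Z)"
  unfolding ltl_entails_def
proof (intro allI impI)
  fix \<sigma>
  assume "ltl_sat \<sigma> (Psi phi (relabel Z v \<beta>))"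
  then have "ltl_sat \<sigma> (phi (ds_eval (relabel Z v \<beta>) (\<sigma> 0)))"
    by (simp add: ltl_sat_Psi[OF finite_ds_actions[OF wf_dstruct_relabel[OF wf]]])
  then have "ltl_sat \<sigma> (phi (ds_eval Z (\<sigma> 0)))"
    using ds_eval_relabel[OF wf same_arcs lab, of "\<sigma> 0"] entails
    by (auto simp: ltl_entails_def)
  then show "ltl_sat \<sigma> (Psi phi Z)"
    by (simp add: ltl_sat_Psi[OF finite_ds_actions[OF wf]] ds_eval_in_ds_actions[OF wf])
qed

lemma ds_satisfies_relabel:
  assumes "wf_dstruct Z" "ds_satisfies phi Z \<phi>" "ds_lab Z v = \<alpha>"
    and "ltl_entails (phi \<beta>) (phi \<alpha>)"
    and "\<forall>w r. (\<exists>v'. (v, r, v') \<in> ds_arcs Z) \<longrightarrow> (actR \<alpha> w = r \<longleftrightarrow> actR \<beta> w = r)"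
  shows "ds_satisfies phi (relabel Z v \<beta>) \<phi>"
proof -
  have "ltl_entails (LAlways (Psi phi (relabel Z v \<beta>))) (LAlways (Psi phi Z))"
    using ltl_entails_Psi_relabel[OF assms(1,3-5)] by (rule ltl_entails_LAlways_mono)
  then show ?thesis
    using assms(2) unfolding ds_satisfies_def by (rule ltl_entails_trans)
qed

theorem mainTheorem19:
  fixes Succ :: "('w, 's) world"
    and phi :: "('w, 's, 'r) action \<Rightarrow> 'w ltl"
  assumes phi_models: "\<forall>\<gamma>. models_action Succ (phi \<gamma>) \<gamma>"
  shows "(\<forall>(Z :: ('n, 'w, 's, 'r) dstruct) \<phi> v \<alpha> \<beta>.
            wf_dstruct Z \<longrightarrow> ds_satisfies phi Z \<phi> \<longrightarrow>
            v \<in> ds_nodes Z \<longrightarrow> ds_lab Z v = \<alpha> \<longrightarrow>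
            ltl_entails (phi \<beta>) (phi \<alpha>) \<longrightarrow>
            (\<forall>w r. (\<exists>v'. (v, r, v') \<in> ds_arcs Z) \<longrightarrow> (actR \<alpha> w = r \<longleftrightarrow> actR \<beta> w = r)) \<longrightarrow>
            ds_satisfies phi (relabel Z v \<beta>) \<phi>)
      \<and> sufficient_condition phi (cond_i_ii phi :: ('n, 'w, 's, 'r) dstruct \<Rightarrow> _)"
proof
  show "\<forall>(Z :: ('n, 'w, 's, 'r) dstruct) \<phi> v \<alpha> \<beta>.
            wf_dstruct Z \<longrightarrow> ds_satisfies phi Z \<phi> \<longrightarrow>
            v \<in> ds_nodes Z \<longrightarrow> ds_lab Z v = \<alpha> \<longrightarrow>
            ltl_entails (phi \<beta>) (phi \<alpha>) \<longrightarrow>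
            (\<forall>w r. (\<exists>v'. (v, r, v') \<in> ds_arcs Z) \<longrightarrow> (actR \<alpha> w = r \<longleftrightarrow> actR \<beta> w = r)) \<longrightarrow>
            ds_satisfies phi (relabel Z v \<beta>) \<phi>"
    by (intro allI impI, rule ds_satisfies_relabel) assumption+
  then show "sufficient_condition phi (cond_i_ii phi :: ('n, 'w, 's, 'r) dstruct \<Rightarrow> _)"
    unfolding sufficient_condition_def cond_i_ii_def by blast
qed

end
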